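(* Let $r\ge 3$ and let $\mathcal{M}$ be a uniform oriented matroid of rank $r$ on $n$ elements. If $X,Y$ are cocircuits of $\mathcal{M}$ with $|X^0\setminus Y^0|=2$, then $d_{\mathcal{M}}(X,Y)\le n-r+1$.
   Context: Sign vectors: for a finite set $E$ and $X\in\{+,-,0\}^E$, write $X^+=\{e:X_e=+\}$, $X^-=\{e:X_e=-\}$, $X^0=\{e:X_e=0\}$, $\operatorname{supp}(X)=X^+\cup X^-$, and $-X$ for the componentwise negation. For sign vectors $X,Y$, the separating set is $S(X,Y)=(X^+\cap Y^-)\cup(X^-\cap Y^+)$, and the composition $X\circ Y$ is given by $(X\circ Y)_e=X_e$ if $X_e\neq 0$ and $(X\circ Y)_e=Y_e$ otherwise. An oriented matroid $\mathcal{M}=(E,\mathcal{C}^* )$ is a finite set $E$ together with a set $\mathcal{C}^*\subseteq\{+,-,0\}^E$ of (signed) cocircuits satisfying: (CC0) $\mathbf{0}\notin\mathcal{C}^*$; (CC1) $X\in\mathcal{C}^*\Rightarrow -X\in\mathcal{C}^*$; (CC2) if $X,Y\in\mathcal{C}^*$ and $\operatorname{supp}(X)\subseteq\operatorname{supp}(Y)$ then $X=\pm Y$; (CC3) if $X,Y\in\mathcal{C}^*$, $X\neq -Y$ and $e\in S(X,Y)$, then there is $Z\in\mathcal{C}^*$ with $Z^+\subseteq (X^+\cup Y^+)\setminus\{e\}$ and $Z^-\subseteq (X^-\cup Y^-)\setminus\{e\}$. The covectors of $\mathcal{M}$ are $\mathbf{0}$ together with all compositions $X^1\circ\cdots\circ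 X^k$ ($k\ge 1$) of cocircuits, partially ordered componentwise by $0<+$ and $0<-$ ($+,-$ incomparable). The rank $r$ of $\mathcal{M}$ is the largest $k$ such that there is a chain $\mathbf{0}=V_0<V_1<\cdots<V_k$ of covectors. $\mathcal{M}$ is uniform if $|X^0|=r-1$ for every cocircuit $X$. The cocircuit graph $G^*(\mathcal{M})$ has the cocircuits as vertices, with distinct cocircuits $X,Y$ adjacent iff $|X^0\cap Y^0|\ge r-2$ and $S(X,Y)=\emptyset$. $d_{\mathcal{M}}(X,Y)$ denotes graph distance in $G^*(\mathcal{M})$. *)

theory Defs
  imports Main "HOL-Library.Extended_Nat"
begin

datatype sign = Pos | Neg | Zer

type_synonym 'a signvec = "'a \<Rightarrow> sign"

definition sv :: "'a set \<Rightarrow> 'a signvec set" where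
  "sv E = {X. \<forall>e. e \<notin> E \<longrightarrow> X e = Zer}"

definition zerovec :: "'a signvec" where
  "zerovec = (\<lambda>_. Zer)"

definition posp :: "'a signvec \<Rightarrow> 'a set" where "posp X = {e. X e = Pos}"
definition negp :: "'a signvec \<Rightarrow> 'a set" where "negp X = {e. X e = Neg}"
definition zeros :: "'a set \<Rightarrow> 'a signvec \<Rightarrow> 'a set" where
  "zeros E X = {e \<in> E. X e = Zer}"
definition supp :: "'a signvec \<Rightarrow> 'a set" where "supp X = posp X \<union> negp X"

definition negsv :: "'a signvec \<Rightarrow> 'a signvec" where
  "negsv X = (\<lambda>e. case X e of Pos \<Rightarrow> Neg | Neg \<Rightarrow> Pos | Zer \<Rightarrow> Zer)"

definition sep :: "'a signvec \<Rightarrow> 'a signvec \<Rightarrow> 'a set" where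
  "sep X Y = (posp X \<inter> negp Y) \<union> (negp X \<inter> posp Y)"

definition comp :: "'a signvec \<Rightarrow> 'a signvec \<Rightarrow> 'a signvec" where
  "comp X Y = (\<lambda>e. if X e \<noteq> Zer then X e else Y e)"

definition oriented_matroid :: "'a set \<Rightarrow> 'a signvec set \<Rightarrow> bool" where
  "oriented_matroid E C \<longleftrightarrow> finite E \<and> C \<subseteq> sv E \<and>
     zerovec \<notin> C \<and>
     (\<forall>X\<in>C. negsv X \<in> C) \<and>
     (\<forall>X\<in>C. \<forall>Y\<in>C. supp X \<subseteq> supp Y \<longrightarrow> X = Y \<or> X = negsv Y) \<and>
     (\<forall>X\<in>C. \<forall>Y\<in>C. \<forall>e. X \<noteq> negsv Y \<and> e \<in> sep X Y \<longrightarrow>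
        (\<exists>Z\<in>C. posp Z \<subseteq> (posp X \<union> posp Y) - {e} \<and> negp Z \<subseteq> (negp X \<union> negp Y) - {e}))"

definition covectors :: "'a signvec set \<Rightarrow> 'a signvec set" where
  "covectors C = insert zerovec {foldr comp Xs zerovec | Xs. Xs \<noteq> [] \<and> set Xs \<subseteq> C}"

definition sign_le :: "sign \<Rightarrow> sign \<Rightarrow> bool" where
  "sign_le a b \<longleftrightarrow> a = Zer \<or> a = b"

definition sv_le :: "'a signvec \<Rightarrow> 'a signvec \<Rightarrow> bool" where
  "sv_le X Y \<longleftrightarrow> (\<forall>e. sign_le (X e) (Y e))"

definition sv_less :: "'a signvec \<Rightarrow> 'a signvec \<Rightarrow> bool" where
  "sv_less X Y \<longleftrightarrow> sv_le X Y \<and> X \<noteq> Y"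

definition has_chain :: "'a signvec set \<Rightarrow> nat \<Rightarrow> bool" where
  "has_chain C k \<longleftrightarrow> (\<exists>V :: nat \<Rightarrow> 'a signvec. V 0 = zerovec \<and>
      (\<forall>i\<le>k. V i \<in> covectors C) \<and> (\<forall>i<k. sv_less (V i) (V (Suc i))))"

definition om_rank :: "'a signvec set \<Rightarrow> nat" where
  "om_rank C = (GREATEST k. has_chain C k)"

definition uniform_om :: "'a set \<Rightarrow> 'a signvec set \<Rightarrow> bool" where
  "uniform_om E C \<longleftrightarrow> (\<forall>X\<in>C. card (zeros E X) = om_rank C - 1)"

definition cg_adj :: "'a set \<Rightarrow> 'a signvec set \<Rightarrow> 'a signvec \<Rightarrow> 'a signvec \<Rightarrow> bool" where
  "cg_adj E C X Y \<longleftrightarrow> X \<in> C \<and> Y \<in> C \<and> X \<noteq> Y \<and>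
     card (zeros E X \<inter> zeros E Y) \<ge> om_rank C - 2 \<and> sep X Y = {}"

definition cg_walk :: "'a set \<Rightarrow> 'a signvec set \<Rightarrow> 'a signvec list \<Rightarrow> bool" where
  "cg_walk E C ps \<longleftrightarrow> ps \<noteq> [] \<and> set ps \<subseteq> C \<and>
     (\<forall>i. Suc i < length ps \<longrightarrow> cg_adj E C (ps ! i) (ps ! Suc i))"

text \<open>Graph distance in the cocircuit graph (infinity if not connected).\<close>
definition cg_dist :: "'a set \<Rightarrow> 'a signvec set \<Rightarrow> 'a signvec \<Rightarrow> 'a signvec \<Rightarrow> enat" where
  "cg_dist E C X Y = (INF ps \<in> {ps. cg_walk E C ps \<and> hd ps = X \<and> last ps = Y}.
       enat (length ps - 1))"

end

theory Submission
  imports Defs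
begin

text \<open>In a uniform oriented matroid of rank \<open>r\<close> every \<open>(r - 1)\<close>-subset of \<open>E\<close> is the zero set of
  a cocircuit: the zero sets of a maximal chain of covectors form a flag, and cocircuit elimination
  exchanges the zeros of a cocircuit one at a time. If \<open>X\<^sup>0\<close> and \<open>Y\<^sup>0\<close> differ in one element,
  eliminating \<open>X\<close> and \<open>Y\<close> at an element of \<open>S(X,Y)\<close> gives a cocircuit between them that splits
  \<open>S(X,Y)\<close>, so by induction \<open>d(X,Y) \<le> |S(X,Y)| + 1\<close>.
  Now let \<open>X\<^sup>0 = A + a + b\<close> and \<open>Y\<^sup>0 = A + c + d\<close>. A walk through a cocircuit \<open>W\<close> with
  \<open>W\<^sup>0 = A + a + c\<close> has length at most \<open>|S(X,W)| + |S(W,Y)| + 2\<close>, and these detour costs of \<open>W\<close>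
  and \<open>-W\<close> add up to \<open>2(n - r)\<close>. Eliminating \<open>X\<close> and \<open>W\<close> at \<open>d\<close> gives a second candidate \<open>Z\<close>
  with \<open>Z\<^sup>0 = A + a + d\<close>, and the costs of \<open>W\<close> and \<open>Z\<close> have odd sum. So one of \<open>\<plusminus>W\<close>, \<open>\<plusminus>Z\<close>
  costs less than \<open>n - r\<close>, whence \<open>d(X,Y) \<le> n - r + 1\<close>.\<close>

section \<open>Sign vectors\<close>

lemma negsv_eq_Zer_iff [simp]: "negsv X e = Zer \<longleftrightarrow> X e = Zer"
  by (auto simp: negsv_def split: sign.splits)

lemma zeros_subset: "zeros E X \<subseteq> E"
  by (auto simp: zeros_def)

lemma zeros_negsv [simp]: "zeros E (negsv X) = zeros E X"
  by (auto simp: zeros_def)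

lemma neq_negsv_if_zeros_neq: "zeros E X \<noteq> zeros E Y \<Longrightarrow> X \<noteq> negsv Y"
  by (metis zeros_negsv)

lemma sep_commute: "sep X Y = sep Y X"
  by (auto simp: sep_def)

lemma mem_sep_iff: "e \<in> sep X Y \<longleftrightarrow> (X e = Pos \<and> Y e = Neg) \<or> (X e = Neg \<and> Y e = Pos)"
  by (auto simp: sep_def posp_def negp_def)

lemma sep_subset_sv: "X \<in> sv E \<Longrightarrow> sep X Y \<subseteq> E"
  by (force simp: sv_def mem_sep_iff)

lemma mem_sep_or_mem_sep_negsv:
  "X e \<noteq> Zer \<Longrightarrow> Y e \<noteq> Zer \<Longrightarrow> e \<in> sep X Y \<or> e \<in> sep X (negsv Y)"
  by (cases "X e"; cases "Y e") (auto simp: mem_sep_iff negsv_def)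

lemma insert_Int_zeros_subset:
  assumes "e \<in> E" "Z e = Zer" "\<And>f. Z f \<noteq> Zer \<Longrightarrow> Z f = X f \<or> Z f = Y f"
  shows "insert e (zeros E X \<inter> zeros E Y) \<subseteq> zeros E Z"
proof
  fix f assume "f \<in> insert e (zeros E X \<inter> zeros E Y)"
  then show "f \<in> zeros E Z"
    using assms(1,2) assms(3)[of f] by (cases "Z f = Zer") (auto simp: zeros_def)
qed

lemma card_sep_conformal_lt:
  assumes "Z e = Zer" and conform: "\<And>f. Z f \<noteq> Zer \<Longrightarrow> Z f = X f \<or> Z f = Y f"
    and "e \<in> sep X Y" "finite (sep X Y)"
  shows "card (sep X Z) + card (sep Z Y) < card (sep X Y)"
proof -
  have sub: "sep X Z \<union> sep Z Y \<subseteq> sep X Y - {e}"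
  proof
    fix x assume "x \<in> sep X Z \<union> sep Z Y"
    then show "x \<in> sep X Y - {e}"
      using assms(1) conform[of x] by (cases "X x"; cases "Y x"; cases "Z x") (auto simp: mem_sep_iff)
  qed
  have "x \<notin> sep X Z \<inter> sep Z Y" for x
    using conform[of x] by (cases "Z x") (auto simp: mem_sep_iff)
  then have disj: "sep X Z \<inter> sep Z Y = {}"
    by blast
  have "finite (sep X Z \<union> sep Z Y)"
    using sub assms(4) finite_subset by blast
  then have "card (sep X Z) + card (sep Z Y) = card (sep X Z \<union> sep Z Y)"
    using disj by (simp add: card_Un_disjoint)
  also have "\<dots> \<le> card (sep X Y - {e})"
    using sub assms(4) by (intro card_mono) auto
  also have "\<dots> < card (sep X Y)"
    using assms(4,3) by (rule card_Diff1_less)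
  finally show ?thesis .
qed

section \<open>Walks in the cocircuit graph\<close>

lemma cg_walk_Cons_Cons:
  "cg_walk E C (X # Y # Ws) \<longleftrightarrow> cg_adj E C X Y \<and> cg_walk E C (Y # Ws)"
proof
  assume walk: "cg_walk E C (X # Y # Ws)"
  have "cg_adj E C ((Y # Ws) ! i) ((Y # Ws) ! Suc i)" if "Suc i < length (Y # Ws)" for i
    using walk that unfolding cg_walk_def by (metis Suc_less_eq length_Cons nth_Cons_Suc)
  with walk show "cg_adj E C X Y \<and> cg_walk E C (Y # Ws)"
    by (auto simp: cg_walk_def)
next
  assume "cg_adj E C X Y \<and> cg_walk E C (Y # Ws)"
  then show "cg_walk E C (X # Y # Ws)"
    unfolding cg_walk_def
    by (auto simp: cg_adj_def nth_Cons split: nat.split)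
qed

lemma cg_walk_append:
  "cg_walk E C Ws \<Longrightarrow> cg_walk E C Vs \<Longrightarrow> last Ws = hd Vs \<Longrightarrow> cg_walk E C (Ws @ tl Vs)"
proof (induction Ws rule: induct_list012)
  case 1
  then show ?case by (simp add: cg_walk_def)
next
  case (2 X)
  then show ?case by (cases Vs) auto
next
  case (3 X Y Ws)
  then show ?case by (simp add: cg_walk_Cons_Cons)
qed

text \<open>A walk is the list of its vertices, so \<open>length Ws \<le> Suc k\<close> means at most \<open>k\<close> edges.\<close>

definition cg_reach :: "'a set \<Rightarrow> 'a signvec set \<Rightarrow> nat \<Rightarrow> 'a signvec \<Rightarrow> 'a signvec \<Rightarrow> bool" where
  "cg_reach E C k X Y \<longleftrightarrow>
     (\<exists>Ws. cg_walk E C Ws \<and> hd Ws = X \<and> last Ws = Y \<and> length Ws \<le> Suc k)"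

lemma cg_reach_mono: "cg_reach E C k X Y \<Longrightarrow> k \<le> m \<Longrightarrow> cg_reach E C m X Y"
  unfolding cg_reach_def by force

lemma cg_reach_trans:
  assumes "cg_reach E C k X Y" "cg_reach E C m Y Z"
  shows "cg_reach E C (k + m) X Z"
proof -
  obtain Ws Vs
    where Ws: "cg_walk E C Ws" "hd Ws = X" "last Ws = Y" "length Ws \<le> Suc k"
      and Vs: "cg_walk E C Vs" "hd Vs = Y" "last Vs = Z" "length Vs \<le> Suc m"
    using assms unfolding cg_reach_def by blast
  have "Ws \<noteq> []" "Vs \<noteq> []"
    using Ws(1) Vs(1) by (auto simp: cg_walk_def)
  moreover have "cg_walk E C (Ws @ tl Vs)"
    using Ws Vs by (simp add: cg_walk_append)
  ultimately show ?thesis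
    using Ws Vs unfolding cg_reach_def
    by (intro exI[of _ "Ws @ tl Vs"]) (cases Vs; auto)
qed

lemma cg_reach_if_adj: "cg_adj E C X Y \<Longrightarrow> cg_reach E C 1 X Y"
  unfolding cg_reach_def
  by (intro exI[of _ "[X, Y]"]) (auto simp: cg_walk_Cons_Cons cg_walk_def cg_adj_def)

lemma cg_dist_le_if_reach: "cg_reach E C k X Y \<Longrightarrow> cg_dist E C X Y \<le> enat k"
  unfolding cg_reach_def cg_dist_def
  by (elim exE conjE, rule INF_lower2) auto

section \<open>Exchange in set families\<close>

text \<open>The eliminant of \<open>insert p (Q - {q})\<close> and \<open>Q\<close> at \<open>e\<close> is forced by its cardinality to be
  \<open>insert e (Q - {q})\<close>.\<close>

lemma family_swap:
  assumes "finite E"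
    and family: "\<And>h. h \<in> H \<Longrightarrow> h \<subseteq> E \<and> card h = k"
    and elimination: "\<And>h1 h2 e. \<lbrakk>h1 \<in> H; h2 \<in> H; h1 \<noteq> h2; e \<in> E - (h1 \<union> h2)\<rbrakk>
                          \<Longrightarrow> \<exists>h\<in>H. insert e (h1 \<inter> h2) \<subseteq> h"
    and upward: "\<And>T. \<lbrakk>T \<subseteq> E; card T = k; insert p K \<subseteq> T\<rbrakk> \<Longrightarrow> T \<in> H"
    and "p \<in> E" "Q \<in> H" "K \<subseteq> Q" "p \<notin> Q" "q \<in> Q - K" "e \<in> E - insert p Q"
  shows "insert e (Q - {q}) \<in> H"
proof -
  have "Q \<subseteq> E" "card Q = k" "finite Q"
    using family[OF \<open>Q \<in> H\<close>] \<open>finite E\<close> finite_subset by auto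
  with \<open>q \<in> Q - K\<close> have "0 < k"
    using card_gt_0_iff by blast
  define Q1 where "Q1 = insert p (Q - {q})"
  have "Q1 \<in> H"
  proof (rule upward)
    show "Q1 \<subseteq> E"
      using \<open>Q \<subseteq> E\<close> \<open>p \<in> E\<close> by (auto simp: Q1_def)
    show "card Q1 = k"
      using \<open>card Q = k\<close> \<open>finite Q\<close> assms(8,9) \<open>0 < k\<close> by (simp add: Q1_def card_Diff_singleton)
    show "insert p K \<subseteq> Q1"
      using assms(7,9) by (auto simp: Q1_def)
  qed
  moreover have "Q1 \<noteq> Q" "e \<in> E - (Q1 \<union> Q)"
    using assms(8,10) by (auto simp: Q1_def)
  ultimately obtain h where h: "h \<in> H" "insert e (Q1 \<inter> Q) \<subseteq> h"
    using elimination[OF _ \<open>Q \<in> H\<close>] by blast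
  have "insert e (Q - {q}) \<subseteq> h"
    using h(2) \<open>p \<notin> Q\<close> by (auto simp: Q1_def)
  moreover have "card (insert e (Q - {q})) = k"
    using \<open>card Q = k\<close> \<open>finite Q\<close> assms(9,10) \<open>0 < k\<close> by (simp add: card_Diff_singleton)
  moreover have "finite h" "card h = k"
    using family[OF h(1)] \<open>finite E\<close> finite_subset by auto
  ultimately have "insert e (Q - {q}) = h"
    using card_subset_eq by metis
  with h(1) show ?thesis
    by simp
qed

lemma family_exchange:
  assumes "finite E"
    and family: "\<And>h. h \<in> H \<Longrightarrow> h \<subseteq> E \<and> card h = k"
    and elimination: "\<And>h1 h2 e. \<lbrakk>h1 \<in> H; h2 \<in> H; h1 \<noteq> h2; e \<in> E - (h1 \<union> h2)\<rbrakk>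
                          \<Longrightarrow> \<exists>h\<in>H. insert e (h1 \<inter> h2) \<subseteq> h"
    and upward: "\<And>T. \<lbrakk>T \<subseteq> E; card T = k; insert p K \<subseteq> T\<rbrakk> \<Longrightarrow> T \<in> H"
    and "p \<in> E"
    and S: "S \<subseteq> E" "card S = k" "K \<subseteq> S" "p \<notin> S"
    and "Q \<in> H" "K \<subseteq> Q" "p \<notin> Q"
  shows "S \<in> H"
  using assms(10-)
proof (induction "card (S - Q)" arbitrary: Q)
  case 0
  have "finite S" "finite Q" "card Q = k"
    using S family[OF 0(2)] \<open>finite E\<close> finite_subset by auto
  moreover have "S \<subseteq> Q"
    using 0(1) \<open>finite S\<close> by simp
  ultimately have "S = Q"
    using S(2) by (simp add: card_subset_eq)
  with 0 show ?case by simp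
next
  case (Suc m)
  have "finite S" "card Q = k"
    using S family[OF Suc(3)] \<open>finite E\<close> finite_subset by auto
  obtain e where e: "e \<in> S" "e \<notin> Q"
    using Suc(2) by (metis Diff_eq_empty_iff card.empty nat.distinct(1) subsetI)
  obtain q where q: "q \<in> Q" "q \<notin> S"
    using card_subset_eq[OF \<open>finite S\<close>, of Q] e \<open>card Q = k\<close> S(2) by (metis subsetI)
  define Q' where "Q' = insert e (Q - {q})"
  have "Q' \<in> H"
    unfolding Q'_def
    by (rule family_swap[OF \<open>finite E\<close> family elimination upward \<open>p \<in> E\<close> Suc(3-5)])
      (use q e S in auto)
  moreover have "K \<subseteq> Q'" "p \<notin> Q'"
    using Suc(4,5) q e S(3,4) by (auto simp: Q'_def)
  moreover have "S - Q' = (S - Q) - {e}"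
    using q by (auto simp: Q'_def)
  then have "m = card (S - Q')"
    using Suc(2) e by simp
  ultimately show ?case
    using Suc(1)[of Q'] by simp
qed

lemma flag_family_contains_all:
  assumes "finite E"
    and family: "\<And>h. h \<in> H \<Longrightarrow> h \<subseteq> E \<and> card h = k"
    and elimination: "\<And>h1 h2 e. \<lbrakk>h1 \<in> H; h2 \<in> H; h1 \<noteq> h2; e \<in> E - (h1 \<union> h2)\<rbrakk>
                          \<Longrightarrow> \<exists>h\<in>H. insert e (h1 \<inter> h2) \<subseteq> h"
    and flag_card: "\<And>j. j \<le> k \<Longrightarrow> card (G j) = j"
    and flag_mono: "\<And>j. j < k \<Longrightarrow> G j \<subseteq> G (Suc j)"
    and flag_covered: "\<And>j. j \<le> k \<Longrightarrow> \<exists>h\<in>H. G j \<subseteq> h"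
    and flag_closed: "\<And>j y. \<lbrakk>j \<le> k; y \<in> E - G j\<rbrakk> \<Longrightarrow> \<exists>h\<in>H. G j \<subseteq> h \<and> y \<notin> h"
    and "S \<subseteq> E" "card S = k"
  shows "S \<in> H"
proof -
  have G_subset: "G j \<subseteq> E" if "j \<le> k" for j
    using flag_covered[OF that] family by blast
  then have finite_G: "finite (G j)" if "j \<le> k" for j
    using that \<open>finite E\<close> finite_subset by blast
  have "\<forall>S. S \<subseteq> E \<longrightarrow> card S = k \<longrightarrow> G j \<subseteq> S \<longrightarrow> S \<in> H" if "j \<le> k" for j
    using that
  proof (induction j rule: inc_induct)
    case base
    show ?case
    proof (intro allI impI)
      fix S assume S: "S \<subseteq> E" "card S = k" "G k \<subseteq> S"
      obtain h where h: "h \<in> H" "G k \<subseteq> h"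
        using flag_covered by blast
      have "finite h" "card h = k" "finite S"
        using family[OF h(1)] S \<open>finite E\<close> finite_subset by auto
      then have "G k = h" "G k = S"
        using h(2) S(2,3) flag_card[of k] by (simp_all add: card_subset_eq)
      with h(1) show "S \<in> H" by simp
    qed
  next
    case (step j)
    have "card (G (Suc j) - G j) = 1"
      using card_Diff_subset[OF finite_G flag_mono] flag_card step.hyps by simp
    then obtain p where p: "G (Suc j) - G j = {p}"
      by (meson card_1_singletonE)
    have Gp: "G (Suc j) = insert p (G j)" and "p \<notin> G j"
      using p flag_mono[OF step.hyps(2)] by auto
    moreover have "p \<in> E"
      using G_subset[of "Suc j"] Gp step.hyps by simp
    ultimately obtain Q where "Q \<in> H" "G j \<subseteq> Q" "p \<notin> Q"
      using flag_closed[of j p] step.hyps by force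
    show ?case
    proof (intro allI impI)
      fix S assume S: "S \<subseteq> E" "card S = k" "G j \<subseteq> S"
      show "S \<in> H"
      proof (cases "p \<in> S")
        case True
        then show ?thesis using step.IH S Gp by simp
      next
        case False
        show ?thesis
          by (rule family_exchange[OF \<open>finite E\<close> family elimination _ \<open>p \<in> E\<close> S False
                \<open>Q \<in> H\<close> \<open>G j \<subseteq> Q\<close> \<open>p \<notin> Q\<close>])
            (use step.IH Gp in auto)
      qed
    qed
  qed
  moreover have "G 0 = {}"
    using flag_card[of 0] finite_G[of 0] by simp
  ultimately show ?thesis
    using assms(8,9) by blast
qed

section \<open>Chains of covectors\<close>

lemma foldr_comp_eq_Zer_iff: "foldr comp Xs zerovec e = Zer \<longleftrightarrow> (\<forall>X\<in>set Xs. X e = Zer)"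
  by (induction Xs) (auto simp: comp_def zerovec_def)

lemma covectors_subset_sv: "C \<subseteq> sv E \<Longrightarrow> covectors C \<subseteq> sv E"
  unfolding covectors_def sv_def
  by (auto simp: foldr_comp_eq_Zer_iff) (auto simp: zerovec_def)

lemma covector_zeros_eq_Inter:
  assumes "V \<in> covectors C" "V \<noteq> zerovec"
  shows "\<exists>Xs. Xs \<noteq> [] \<and> set Xs \<subseteq> C \<and> zeros E V = (\<Inter>X\<in>set Xs. zeros E X)"
proof -
  obtain Xs where "V = foldr comp Xs zerovec" "Xs \<noteq> []" "set Xs \<subseteq> C"
    using assms unfolding covectors_def by blast
  moreover from this have "zeros E V = (\<Inter>X\<in>set Xs. zeros E X)"
    by (auto simp: zeros_def foldr_comp_eq_Zer_iff neq_Nil_conv)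
  ultimately show ?thesis by blast
qed

lemma zeros_psubset_if_sv_less:
  assumes "V \<in> sv E" "W \<in> sv E" "sv_less V W"
  shows "zeros E W \<subset> zeros E V"
proof -
  have le: "V e = Zer \<or> V e = W e" for e
    using assms(3) by (auto simp: sv_less_def sv_le_def sign_le_def)
  then have "zeros E W \<subseteq> zeros E V"
    by (force simp: zeros_def)
  moreover have "zeros E W \<noteq> zeros E V"
  proof
    assume eq: "zeros E W = zeros E V"
    have "V e = W e" for e
    proof (cases "e \<in> E")
      case True
      with eq have "V e = Zer \<longleftrightarrow> W e = Zer"
        by (auto simp: zeros_def set_eq_iff)
      with le show ?thesis by metis
    next
      case False
      with assms(1,2) show ?thesis by (simp add: sv_def)
    qed
    with assms(3) show False
      by (simp add: sv_less_def fun_eq_iff)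
  qed
  ultimately show ?thesis by blast
qed

lemma chain_card_zeros_gap:
  assumes "finite E" "C \<subseteq> sv E"
    and chain: "\<forall>i\<le>k. V i \<in> covectors C" "\<forall>i<k. sv_less (V i) (V (Suc i))"
    and "i \<le> j" "j \<le> k"
  shows "card (zeros E (V j)) + (j - i) \<le> card (zeros E (V i))"
  using assms(5,6)
proof (induction j rule: dec_induct)
  case base
  show ?case by simp
next
  case (step j)
  have "V j \<in> sv E" "V (Suc j) \<in> sv E"
    using chain covectors_subset_sv[OF assms(2)] step.hyps step.prems by auto
  then have "zeros E (V (Suc j)) \<subset> zeros E (V j)"
    using chain(2) step.hyps step.prems by (simp add: zeros_psubset_if_sv_less)
  then have "card (zeros E (V (Suc j))) < card (zeros E (V j))"
    using \<open>finite E\<close> by (simp add: psubset_card_mono zeros_def)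
  with step show ?case by simp
qed

lemma has_chain_le_card:
  assumes "finite E" "C \<subseteq> sv E" "has_chain C k"
  shows "k \<le> card E"
proof -
  obtain V where V: "V 0 = zerovec" "\<forall>i\<le>k. V i \<in> covectors C"
      "\<forall>i<k. sv_less (V i) (V (Suc i))"
    using assms(3) unfolding has_chain_def by blast
  have "card (zeros E (V k)) + k \<le> card (zeros E (V 0))"
    using chain_card_zeros_gap[OF assms(1,2) V(2,3), of 0 k] by simp
  also have "\<dots> = card E"
    using V(1) by (simp add: zeros_def zerovec_def)
  finally show ?thesis by simp
qed

section \<open>A parity argument\<close>

definition sep_detour :: "'a signvec \<Rightarrow> 'a signvec \<Rightarrow> 'a signvec \<Rightarrow> nat" where
  "sep_detour X W Y = card (sep X W) + card (sep W Y)"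

lemma card_eq_sum_of_bool: "finite E \<Longrightarrow> S \<subseteq> E \<Longrightarrow> card S = (\<Sum>e\<in>E. of_bool (e \<in> S))"
  by (simp add: Int_absorb1 Int_commute)

lemma odd_sep_detour_add:
  assumes "finite E" "X \<in> sv E" "W \<in> sv E" "Z \<in> sv E"
    and d: "d \<in> sep X W" "Y d = Zer" "Z d = Zer"
    and pattern: "\<And>e. e \<in> E - {d} \<Longrightarrow>
        (X e = Zer \<and> Z e = W e) \<or> (W e = Zer \<and> Y e = Zer \<and> Z e = X e) \<or>
        (X e \<noteq> Zer \<and> Y e \<noteq> Zer \<and> W e \<noteq> Zer \<and> Z e \<noteq> Zer)"
  shows "odd (sep_detour X W Y + sep_detour X Z Y)"
proof -
  define g :: "_ \<Rightarrow> nat" where "g e = of_bool (e \<in> sep X W) + of_bool (e \<in> sep W Y)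
      + of_bool (e \<in> sep X Z) + of_bool (e \<in> sep Z Y)" for e
  have "d \<in> E"
    using d(1) sep_subset_sv[OF assms(2)] by blast
  have "sep_detour X W Y + sep_detour X Z Y = (\<Sum>e\<in>E. g e)"
    using sep_subset_sv[OF assms(2)] sep_subset_sv[OF assms(3)] sep_subset_sv[OF assms(4)]
    unfolding sep_detour_def g_def
    by (simp add: card_eq_sum_of_bool[OF \<open>finite E\<close>] sum.distrib)
  also have "\<dots> = g d + (\<Sum>e\<in>E - {d}. g e)"
    using \<open>finite E\<close> \<open>d \<in> E\<close> by (rule sum.remove)
  finally have sum_eq: "sep_detour X W Y + sep_detour X Z Y = g d + (\<Sum>e\<in>E - {d}. g e)" .
  have "g d = 1"
    using d by (auto simp: g_def mem_sep_iff)
  moreover have "even (\<Sum>e\<in>E - {d}. g e)"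
  proof (rule dvd_sum)
    fix e assume "e \<in> E - {d}"
    from pattern[OF this] show "even (g e)"
    proof (elim disjE conjE)
      assume "X e = Zer" "Z e = W e"
      then show ?thesis by (simp add: g_def mem_sep_iff)
    next
      assume "W e = Zer" "Y e = Zer" "Z e = X e"
      then show ?thesis by (simp add: g_def mem_sep_iff)
    next
      \<comment> \<open>\<open>W\<close> and \<open>Z\<close> each contribute \<open>e \<in> sep X Y\<close> modulo 2\<close>
      assume "X e \<noteq> Zer" "Y e \<noteq> Zer" "W e \<noteq> Zer" "Z e \<noteq> Zer"
      then show ?thesis
        by (cases "X e"; cases "Y e"; cases "W e"; cases "Z e") (simp_all add: g_def mem_sep_iff)
    qed
  qed
  ultimately show ?thesis
    using sum_eq by simp
qed

lemma odd_sep_detour_add_zeros: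
  assumes "finite E" "X \<in> sv E" "Y \<in> sv E" "W \<in> sv E" "Z \<in> sv E"
    and zeros: "zeros E X = insert a (insert b A)" "zeros E Y = insert c (insert d A)"
      "zeros E W = insert a (insert c A)" "zeros E Z = insert a (insert d A)"
    and "d \<in> sep X W" "Z b = W b" "Z c = X c"
  shows "odd (sep_detour X W Y + sep_detour X Z Y)"
proof (rule odd_sep_detour_add[OF assms(1,2,4,5) \<open>d \<in> sep X W\<close>])
  have "d \<in> E"
    using \<open>d \<in> sep X W\<close> sep_subset_sv[OF assms(2)] by blast
  then show "Y d = Zer" "Z d = Zer"
    using zeros(2,4) by (auto simp: zeros_def set_eq_iff)
  fix e assume e: "e \<in> E - {d}"
  have zero_iff: "V e = Zer \<longleftrightarrow> e \<in> zeros E V" for V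
    using e by (simp add: zeros_def)
  consider "e \<in> zeros E X" | "e \<notin> zeros E X" "e \<in> zeros E Y" | "e \<notin> zeros E X \<union> zeros E Y"
    by blast
  then show "(X e = Zer \<and> Z e = W e) \<or> (W e = Zer \<and> Y e = Zer \<and> Z e = X e) \<or>
      (X e \<noteq> Zer \<and> Y e \<noteq> Zer \<and> W e \<noteq> Zer \<and> Z e \<noteq> Zer)"
  proof cases
    case 1
    then have "e = b \<or> (e \<in> zeros E W \<and> e \<in> zeros E Z)"
      using zeros by auto
    then show ?thesis
      using 1 \<open>Z b = W b\<close> zero_iff by metis
  next
    case 2
    then have "e = c"
      using zeros e by auto
    then show ?thesis
      using zeros \<open>Z c = X c\<close> zero_iff by auto
  next
    case 3
    then show ?thesis
      using zeros zero_iff by auto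
  qed
qed

section \<open>Uniform oriented matroids\<close>

locale uniform_oriented_matroid =
  fixes E :: "'a set" and C :: "'a signvec set" and r :: nat
  assumes oriented_matroid: "oriented_matroid E C"
    and rank: "om_rank C = r"
    and uniform: "uniform_om E C"
begin

lemma finite_E: "finite E"
  using oriented_matroid by (simp add: oriented_matroid_def)

lemma cocircuits_sv: "C \<subseteq> sv E"
  using oriented_matroid by (simp add: oriented_matroid_def)

lemma negsv_cocircuit: "X \<in> C \<Longrightarrow> negsv X \<in> C"
  using oriented_matroid by (simp add: oriented_matroid_def)

lemma card_zeros: "X \<in> C \<Longrightarrow> card (zeros E X) = r - 1"
  using uniform rank by (simp add: uniform_om_def)

lemma finite_zeros: "finite (zeros E X)"
  using finite_E zeros_subset by (rule finite_subset[rotated])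

lemma cocircuit_elimination:
  assumes "X \<in> C" "Y \<in> C" "X \<noteq> negsv Y" "e \<in> sep X Y"
  obtains Z where "Z \<in> C" "Z e = Zer" "\<And>f. Z f \<noteq> Zer \<Longrightarrow> Z f = X f \<or> Z f = Y f"
proof -
  obtain Z where Z: "Z \<in> C" "posp Z \<subseteq> (posp X \<union> posp Y) - {e}"
      "negp Z \<subseteq> (negp X \<union> negp Y) - {e}"
    using oriented_matroid assms unfolding oriented_matroid_def by meson
  have "Z f \<noteq> Zer \<Longrightarrow> Z f = X f \<or> Z f = Y f" for f
    using Z(2,3) by (cases "Z f") (auto simp: posp_def negp_def)
  moreover have "Z e = Zer"
    using Z(2,3) by (cases "Z e") (auto simp: posp_def negp_def)
  ultimately show ?thesis
    using that Z(1) by blast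
qed

lemma zeros_eq_if_card:
  assumes "Z \<in> C" "S \<subseteq> zeros E Z" "card S = r - 1"
  shows "zeros E Z = S"
  using card_subset_eq[OF finite_zeros assms(2)] card_zeros[OF assms(1)] assms(3) by simp

lemma card_zeros_Int_add_two:
  assumes "X \<in> C" "Y \<in> C" "card (zeros E X - zeros E Y) = 1"
  shows "card (zeros E X \<inter> zeros E Y) + 2 = r"
proof -
  have "card (zeros E X - zeros E Y) = card (zeros E X) - card (zeros E X \<inter> zeros E Y)"
    by (simp add: card_Diff_subset_Int finite_zeros)
  moreover have "card (zeros E X \<inter> zeros E Y) \<le> card (zeros E X)"
    by (simp add: card_mono finite_zeros)
  ultimately show ?thesis
    using assms card_zeros by simp
qed

lemma cocircuit_elimination_zeros:
  assumes "X \<in> C" "Y \<in> C" "zeros E X \<noteq> zeros E Y" "e \<in> E - (zeros E X \<union> zeros E Y)"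
  shows "\<exists>Z\<in>C. insert e (zeros E X \<inter> zeros E Y) \<subseteq> zeros E Z"
proof -
  have "X e \<noteq> Zer" "Y e \<noteq> Zer"
    using assms(4) by (auto simp: zeros_def)
  then obtain Y' where "Y' \<in> {Y, negsv Y}" "e \<in> sep X Y'"
    by (meson insertI1 insertI2 singletonI mem_sep_or_mem_sep_negsv)
  then have Y': "Y' \<in> C" "zeros E Y' = zeros E Y" "e \<in> sep X Y'"
    using assms(2) negsv_cocircuit by auto
  have "X \<noteq> negsv Y'"
    using neq_negsv_if_zeros_neq[of E X Y'] assms(3) Y'(2) by simp
  then obtain Z where "Z \<in> C" "Z e = Zer" "\<And>f. Z f \<noteq> Zer \<Longrightarrow> Z f = X f \<or> Z f = Y' f"
    using cocircuit_elimination[OF assms(1) Y'(1) _ Y'(3)] by blast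
  then show ?thesis
    using insert_Int_zeros_subset[of e E Z X Y'] assms(4) Y'(2) by auto
qed

lemma has_chain_rank: "has_chain C r"
proof -
  have "has_chain C 0"
    unfolding has_chain_def by (intro exI[of _ "\<lambda>_. zerovec"]) (auto simp: covectors_def)
  then have "has_chain C (GREATEST k. has_chain C k)"
    by (rule GreatestI_nat) (use has_chain_le_card[OF finite_E cocircuits_sv] in blast)
  then show ?thesis
    using rank by (simp add: om_rank_def)
qed

lemma covector_flag:
  assumes "0 < r"
  obtains V where "\<And>i. i \<in> {1..r} \<Longrightarrow> V i \<in> covectors C \<and> V i \<noteq> zerovec"
    "\<And>i. i < r \<Longrightarrow> zeros E (V (Suc i)) \<subseteq> zeros E (V i)"
    "\<And>i. i \<in> {1..r} \<Longrightarrow> card (zeros E (V i)) = r - i"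
proof -
  obtain V where V: "V 0 = zerovec" "\<forall>i\<le>r. V i \<in> covectors C"
      "\<forall>i<r. sv_less (V i) (V (Suc i))"
    using has_chain_rank unfolding has_chain_def by blast
  define f where "f i = card (zeros E (V i))" for i
  have gap: "f j + (j - i) \<le> f i" if "i \<le> j" "j \<le> r" for i j
    using chain_card_zeros_gap[OF finite_E cocircuits_sv V(2,3) that] by (simp add: f_def)
  have nonzero: "V i \<noteq> zerovec" if "i \<in> {1..r}" for i
    using gap[of 0 i] that V(1) by (auto simp: f_def)
  have "f 1 \<le> r - 1"
  proof -
    obtain Xs where Xs: "Xs \<noteq> []" "set Xs \<subseteq> C" "zeros E (V 1) = (\<Inter>X\<in>set Xs. zeros E X)"
      using covector_zeros_eq_Inter[of "V 1" C E] V(2) nonzero assms by auto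
    then have "f 1 \<le> card (zeros E (hd Xs))"
      unfolding f_def by (intro card_mono finite_zeros) auto
    also have "\<dots> = r - 1"
      using Xs(1,2) card_zeros hd_in_set by blast
    finally show ?thesis .
  qed
  then have card_flag: "f i = r - i" if "i \<in> {1..r}" for i
    using gap[of i r] gap[of 1 i] that by auto
  have flag_mono: "zeros E (V (Suc i)) \<subseteq> zeros E (V i)" if "i < r" for i
  proof -
    have "V i \<in> sv E" "V (Suc i) \<in> sv E"
      using V(2) that covectors_subset_sv[OF cocircuits_sv] by auto
    then show ?thesis
      using zeros_psubset_if_sv_less V(3) that by blast
  qed
  have "V i \<in> covectors C \<and> V i \<noteq> zerovec" if "i \<in> {1..r}" for i
    using V(2) nonzero that by simp
  from that[OF this flag_mono card_flag[unfolded f_def]] show ?thesis .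
qed

lemma exists_cocircuit_with_zeros:
  assumes "0 < r" "S \<subseteq> E" "card S = r - 1"
  shows "\<exists>X\<in>C. zeros E X = S"
proof -
  obtain V where V: "\<And>i. i \<in> {1..r} \<Longrightarrow> V i \<in> covectors C \<and> V i \<noteq> zerovec"
      "\<And>i. i < r \<Longrightarrow> zeros E (V (Suc i)) \<subseteq> zeros E (V i)"
      "\<And>i. i \<in> {1..r} \<Longrightarrow> card (zeros E (V i)) = r - i"
    using covector_flag[OF assms(1)] by blast
  define G where "G j = zeros E (V (r - j))" for j
  have G_Inter: "\<exists>Xs. Xs \<noteq> [] \<and> set Xs \<subseteq> C \<and> G j = (\<Inter>X\<in>set Xs. zeros E X)"
    if "j \<le> r - 1" for j
  proof -
    have "V (r - j) \<in> covectors C" "V (r - j) \<noteq> zerovec"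
      using V(1)[of "r - j"] that assms(1) by auto
    then show ?thesis
      unfolding G_def by (rule covector_zeros_eq_Inter)
  qed
  have "S \<in> zeros E ` C"
  proof (rule flag_family_contains_all[OF finite_E, where H = "zeros E ` C" and k = "r - 1" and G = G])
    show "h \<subseteq> E \<and> card h = r - 1" if "h \<in> zeros E ` C" for h
      using that by (auto simp: card_zeros dest: subsetD[OF zeros_subset])
    show "\<exists>h\<in>zeros E ` C. insert e (h1 \<inter> h2) \<subseteq> h"
      if h: "h1 \<in> zeros E ` C" "h2 \<in> zeros E ` C" "h1 \<noteq> h2" "e \<in> E - (h1 \<union> h2)"
      for h1 h2 e
    proof -
      obtain X Y where "X \<in> C" "Y \<in> C" "h1 = zeros E X" "h2 = zeros E Y"
        using h(1,2) by blast
      then show ?thesis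
        using cocircuit_elimination_zeros[of X Y e] h(3,4) by blast
    qed
    show "card (G j) = j" if "j \<le> r - 1" for j
      using V(3)[of "r - j"] that assms(1) by (simp add: G_def)
    show "G j \<subseteq> G (Suc j)" if "j < r - 1" for j
      using V(2)[of "r - Suc j"] that by (simp add: G_def Suc_diff_Suc)
    show "\<exists>h\<in>zeros E ` C. G j \<subseteq> h" if j: "j \<le> r - 1" for j
    proof -
      obtain Xs where "Xs \<noteq> []" "set Xs \<subseteq> C" "G j = (\<Inter>X\<in>set Xs. zeros E X)"
        using G_Inter[OF j] by blast
      then show ?thesis
        using hd_in_set[of Xs] by blast
    qed
    show "\<exists>h\<in>zeros E ` C. G j \<subseteq> h \<and> y \<notin> h" if "j \<le> r - 1" "y \<in> E - G j" for j y
      using G_Inter[OF that(1)] that(2) by blast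
  qed (use assms(2,3) in simp_all)
  then show ?thesis by auto
qed

lemma cg_reach_if_card_zeros_diff_one:
  assumes "X \<in> C" "Y \<in> C" "card (zeros E X - zeros E Y) = 1"
  shows "cg_reach E C (card (sep X Y) + 1) X Y"
  using assms
proof (induction "card (sep X Y)" arbitrary: X Y rule: less_induct)
  case less
  have card_Int: "card (zeros E X \<inter> zeros E Y) + 2 = r"
    using card_zeros_Int_add_two less.prems .
  have zeros_ne: "zeros E X \<noteq> zeros E Y"
    using less.prems(3) by auto
  show ?case
  proof (cases "sep X Y = {}")
    case True
    then have "cg_adj E C X Y"
      using less.prems card_Int zeros_ne rank by (auto simp: cg_adj_def)
    then show ?thesis
      using cg_reach_if_adj cg_reach_mono by fastforce
  next
    case False
    then obtain e where e: "e \<in> sep X Y" by blast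
    have sep_E: "sep X Y \<subseteq> E"
      using cocircuits_sv less.prems(1) by (intro sep_subset_sv) blast
    then have "finite (sep X Y)"
      using finite_E by (rule finite_subset)
    have "X \<noteq> negsv Y"
      using zeros_ne by (rule neq_negsv_if_zeros_neq)
    then obtain W where W: "W \<in> C" "W e = Zer" "\<And>f. W f \<noteq> Zer \<Longrightarrow> W f = X f \<or> W f = Y f"
      using cocircuit_elimination[OF less.prems(1,2) _ e] by blast
    have e_notin: "e \<in> E" "e \<notin> zeros E X" "e \<notin> zeros E Y"
      using e sep_E by (auto simp: zeros_def mem_sep_iff)
    have "insert e (zeros E X \<inter> zeros E Y) \<subseteq> zeros E W"
      using e_notin(1) W(2,3) by (rule insert_Int_zeros_subset)
    moreover have "card (insert e (zeros E X \<inter> zeros E Y)) = r - 1"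
      using e_notin card_Int finite_zeros by simp
    ultimately have "zeros E W = insert e (zeros E X \<inter> zeros E Y)"
      using zeros_eq_if_card W(1) by blast
    then have "zeros E X - zeros E W = zeros E X - zeros E Y" "zeros E W - zeros E Y = {e}"
      using e_notin by auto
    then have diff_one: "card (zeros E X - zeros E W) = 1" "card (zeros E W - zeros E Y) = 1"
      using less.prems(3) by simp_all
    have lt: "card (sep X W) + card (sep W Y) < card (sep X Y)"
      using card_sep_conformal_lt[OF W(2,3) e \<open>finite (sep X Y)\<close>] .
    have "cg_reach E C (card (sep X W) + 1) X W" "cg_reach E C (card (sep W Y) + 1) W Y"
      using less.hyps lt less.prems W(1) diff_one by simp_all
    then have "cg_reach E C (card (sep X W) + 1 + (card (sep W Y) + 1)) X Y"
      by (rule cg_reach_trans)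
    then show ?thesis
      by (rule cg_reach_mono) (use lt in simp)
  qed
qed

lemma card_sep_add_card_sep_negsv:
  assumes "X \<in> C" "W \<in> C" "card (zeros E X - zeros E W) = 1"
  shows "card (sep X W) + card (sep X (negsv W)) = card E - r"
proof -
  have "e \<in> sep X W \<union> sep X (negsv W) \<longleftrightarrow> X e \<noteq> Zer \<and> W e \<noteq> Zer" for e
    by (cases "X e"; cases "W e") (simp_all add: mem_sep_iff negsv_def)
  then have union: "sep X W \<union> sep X (negsv W) = E - (zeros E X \<union> zeros E W)"
    using cocircuits_sv assms(1) by (auto simp: zeros_def sv_def)
  have disjoint: "sep X W \<inter> sep X (negsv W) = {}"
    by (auto simp: mem_sep_iff negsv_def)
  have "card (zeros E X \<union> zeros E W) + card (zeros E X \<inter> zeros E W)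
      = card (zeros E X) + card (zeros E W)"
    by (rule card_Un_Int[symmetric]) (rule finite_zeros)+
  then have card_Un: "card (zeros E X \<union> zeros E W) = r"
    using card_zeros_Int_add_two[OF assms] card_zeros assms(1,2) by simp
  have "finite (sep X W)" "finite (sep X (negsv W))"
    using union finite_E by (metis finite_Diff finite_Un)+
  then have "card (sep X W) + card (sep X (negsv W)) = card (sep X W \<union> sep X (negsv W))"
    using disjoint by (simp add: card_Un_disjoint)
  also have "\<dots> = card E - r"
    unfolding union card_Un[symmetric] using finite_E
    by (simp add: card_Diff_subset finite_zeros zeros_subset)
  finally show ?thesis .
qed

lemma sep_detour_add_negsv:
  assumes "X \<in> C" "Y \<in> C" "W \<in> C"
    and "card (zeros E X - zeros E W) = 1" "card (zeros E Y - zeros E W) = 1"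
  shows "sep_detour X W Y + sep_detour X (negsv W) Y = 2 * (card E - r)"
  using card_sep_add_card_sep_negsv[OF assms(1,3,4)] card_sep_add_card_sep_negsv[OF assms(2,3,5)]
  by (simp add: sep_detour_def sep_commute[of _ Y])

lemma cg_reach_via:
  assumes "X \<in> C" "Y \<in> C" "W \<in> C"
    and "card (zeros E X - zeros E W) = 1" "card (zeros E W - zeros E Y) = 1"
  shows "cg_reach E C (sep_detour X W Y + 2) X Y"
  using cg_reach_trans[OF cg_reach_if_card_zeros_diff_one[OF assms(1,3,4)]
      cg_reach_if_card_zeros_diff_one[OF assms(3,2,5)]]
  by (simp add: sep_detour_def)

lemma zeros_diff_two_cases:
  assumes "X \<in> C" "Y \<in> C" "card (zeros E X - zeros E Y) = 2"
  obtains a b c d where "zeros E X - zeros E Y = {a, b}" "zeros E Y - zeros E X = {c, d}"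
    "a \<noteq> b" "c \<noteq> d" "card (zeros E X \<inter> zeros E Y) + 3 = r"
proof -
  have "card (zeros E X - zeros E Y) = card (zeros E X) - card (zeros E X \<inter> zeros E Y)"
    "card (zeros E Y - zeros E X) = card (zeros E Y) - card (zeros E X \<inter> zeros E Y)"
    by (simp_all add: card_Diff_subset_Int finite_zeros Int_commute)
  moreover have "card (zeros E X \<inter> zeros E Y) \<le> card (zeros E X)"
    by (simp add: card_mono finite_zeros)
  ultimately have "card (zeros E X \<inter> zeros E Y) + 3 = r" "card (zeros E Y - zeros E X) = 2"
    using assms card_zeros by simp_all
  with assms(3) show ?thesis
    using that by (auto simp: card_2_iff)
qed

lemma exists_cocircuit_with_zeros_sep:
  assumes "X \<in> C" "0 < r" "S \<subseteq> E" "card S = r - 1" "d \<in> E - (S \<union> zeros E X)"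
  obtains W where "W \<in> C" "zeros E W = S" "d \<in> sep X W"
proof -
  obtain W0 where W0: "W0 \<in> C" "zeros E W0 = S"
    using exists_cocircuit_with_zeros[OF assms(2-4)] by blast
  have "d \<in> E" "d \<notin> zeros E X" "d \<notin> zeros E W0"
    using assms(5) W0(2) by auto
  then have "X d \<noteq> Zer" "W0 d \<noteq> Zer"
    by (simp_all add: zeros_def)
  then have "d \<in> sep X W0 \<or> d \<in> sep X (negsv W0)"
    by (rule mem_sep_or_mem_sep_negsv)
  then show ?thesis
  proof
    assume "d \<in> sep X W0"
    with W0 show ?thesis
      by (rule that)
  next
    assume "d \<in> sep X (negsv W0)"
    with negsv_cocircuit[OF W0(1)] W0(2) show ?thesis
      by (intro that) simp_all
  qed
qed

lemma intermediate_cocircuits: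
  assumes X: "X \<in> C" and Y: "Y \<in> C"
    and diff: "zeros E X - zeros E Y = {a, b}" "zeros E Y - zeros E X = {c, d}" "a \<noteq> b" "c \<noteq> d"
    and card_Int: "card (zeros E X \<inter> zeros E Y) + 3 = r"
  defines "A \<equiv> zeros E X \<inter> zeros E Y"
  obtains W Z where "W \<in> C" "zeros E W = insert a (insert c A)" "d \<in> sep X W"
    "Z \<in> C" "zeros E Z = insert a (insert d A)" "Z b = W b" "Z c = X c"
proof -
  have in_E: "a \<in> E" "b \<in> E" "c \<in> E" "d \<in> E"
    using diff zeros_subset[of E X] zeros_subset[of E Y] by blast+
  have "finite A"
    by (simp add: A_def finite_zeros)
  have "a \<notin> A" "b \<notin> A" "c \<notin> A" "d \<notin> A" "a \<noteq> c" "a \<noteq> d" "b \<noteq> c" "b \<noteq> d"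
    using diff by (auto simp: A_def)
  then have "card (insert a (insert c A)) = r - 1" "card (insert a (insert d A)) = r - 1"
    using \<open>finite A\<close> card_Int by (simp_all add: A_def)
  moreover have "insert a (insert c A) \<subseteq> E" "d \<in> E - (insert a (insert c A) \<union> zeros E X)"
    using in_E diff(2,4) \<open>d \<notin> A\<close> \<open>a \<noteq> d\<close> zeros_subset[of E X] by (auto simp: A_def)
  ultimately obtain W where W: "W \<in> C" "zeros E W = insert a (insert c A)" "d \<in> sep X W"
    using exists_cocircuit_with_zeros_sep[OF X] card_Int by (metis zero_less_numeral add_gr_0)
  have "b \<in> zeros E X" "b \<notin> zeros E W"
    using diff W(2) \<open>b \<notin> A\<close> \<open>a \<noteq> b\<close> \<open>b \<noteq> c\<close> by auto
  then have "X \<noteq> negsv W"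
    by (intro neq_negsv_if_zeros_neq) blast
  then obtain Z where Z: "Z \<in> C" "Z d = Zer" "\<And>f. Z f \<noteq> Zer \<Longrightarrow> Z f = X f \<or> Z f = W f"
    using cocircuit_elimination[OF X W(1) _ W(3)] by blast
  have "insert d (zeros E X \<inter> zeros E W) \<subseteq> zeros E Z"
    using in_E(4) Z(2,3) by (rule insert_Int_zeros_subset)
  moreover have "zeros E X \<inter> zeros E W = insert a A"
    using diff W(2) \<open>a \<noteq> c\<close> \<open>c \<notin> A\<close> by (auto simp: A_def)
  ultimately have zeros_Z: "zeros E Z = insert a (insert d A)"
    using zeros_eq_if_card[OF Z(1)] \<open>card (insert a (insert d A)) = r - 1\<close>
    by (simp add: insert_commute)
  have "b \<notin> zeros E Z" "c \<notin> zeros E Z" "c \<in> zeros E W"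
    using zeros_Z W(2) \<open>b \<notin> A\<close> \<open>a \<noteq> b\<close> \<open>b \<noteq> d\<close> \<open>c \<notin> A\<close> \<open>a \<noteq> c\<close> diff(4) by auto
  then have "Z b = W b" "Z c = X c"
    using Z(3)[of b] Z(3)[of c] \<open>b \<in> zeros E X\<close> in_E(2,3) by (auto simp: zeros_def)
  with W Z(1) zeros_Z show ?thesis
    by (rule that)
qed

lemma exists_short_detour:
  assumes X: "X \<in> C" and Y: "Y \<in> C" and "card (zeros E X - zeros E Y) = 2"
  shows "\<exists>W\<in>C. card (zeros E X - zeros E W) = 1 \<and> card (zeros E W - zeros E Y) = 1 \<and>
    sep_detour X W Y < card E - r"
proof -
  obtain a b c d where diff: "zeros E X - zeros E Y = {a, b}" "zeros E Y - zeros E X = {c, d}"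
      "a \<noteq> b" "c \<noteq> d" and card_Int: "card (zeros E X \<inter> zeros E Y) + 3 = r"
    using zeros_diff_two_cases[OF assms] .
  define A where "A = zeros E X \<inter> zeros E Y"
  obtain W Z where W: "W \<in> C" "zeros E W = insert a (insert c A)" "d \<in> sep X W"
      and Z: "Z \<in> C" "zeros E Z = insert a (insert d A)" "Z b = W b" "Z c = X c"
    using intermediate_cocircuits[OF X Y diff card_Int] unfolding A_def by blast
  have zeros_XY: "zeros E X = insert a (insert b A)" "zeros E Y = insert c (insert d A)"
    using diff(1,2) by (auto simp: A_def)
  have "a \<notin> A" "b \<notin> A" "c \<notin> A" "d \<notin> A" "a \<noteq> c" "a \<noteq> d" "b \<noteq> c" "b \<noteq> d"
    using diff(1,2) by (auto simp: A_def)
  then have W_diffs: "zeros E X - zeros E W = {b}" "zeros E W - zeros E Y = {a}"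
      "zeros E Y - zeros E W = {d}"
    and Z_diffs: "zeros E X - zeros E Z = {b}" "zeros E Z - zeros E Y = {a}"
      "zeros E Y - zeros E Z = {c}"
    using zeros_XY W(2) Z(2) diff(3,4) by auto
  have "X \<in> sv E" "Y \<in> sv E" "W \<in> sv E" "Z \<in> sv E"
    using X Y W(1) Z(1) cocircuits_sv by auto
  then have odd: "odd (sep_detour X W Y + sep_detour X Z Y)"
    using odd_sep_detour_add_zeros[OF finite_E _ _ _ _ zeros_XY W(2) Z(2) W(3) Z(3,4)] by blast
  have sums: "sep_detour X W Y + sep_detour X (negsv W) Y = 2 * (card E - r)"
      "sep_detour X Z Y + sep_detour X (negsv Z) Y = 2 * (card E - r)"
    using sep_detour_add_negsv[OF X Y] W(1) Z(1) W_diffs Z_diffs by simp_all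
  have "\<exists>V\<in>{W, negsv W, Z, negsv Z}. sep_detour X V Y < card E - r"
  proof (rule ccontr)
    assume "\<not> ?thesis"
    then have "sep_detour X W Y = card E - r" "sep_detour X Z Y = card E - r"
      using sums by auto
    with odd show False by simp
  qed
  moreover have "V \<in> C \<and> card (zeros E X - zeros E V) = 1 \<and> card (zeros E V - zeros E Y) = 1"
    if "V \<in> {W, negsv W, Z, negsv Z}" for V
    using that W(1) Z(1) negsv_cocircuit W_diffs Z_diffs by auto
  ultimately show ?thesis
    by blast
qed

end

theorem corollary4p3:
  fixes E :: "'a set" and C :: "'a signvec set" and r n :: nat and X Y :: "'a signvec"
  assumes "oriented_matroid E C"
    and "card E = n"
    and "om_rank C = r"
    and "r \<ge> 3"
    and "uniform_om E C"
    and "X \<in> C" and "Y \<in> C"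
    and "card (zeros E X - zeros E Y) = 2"
  shows "cg_dist E C X Y \<le> enat (n - r + 1)"
proof -
  interpret uniform_oriented_matroid E C r
    using assms(1,3,5) by unfold_locales
  obtain W where W: "W \<in> C" "card (zeros E X - zeros E W) = 1"
      "card (zeros E W - zeros E Y) = 1" "sep_detour X W Y < n - r"
    using exists_short_detour[OF assms(6-8)] assms(2) by blast
  have "cg_reach E C (sep_detour X W Y + 2) X Y"
    using cg_reach_via[OF assms(6,7) W(1-3)] .
  then have "cg_reach E C (n - r + 1) X Y"
    by (rule cg_reach_mono) (use W(4) in simp)
  then show ?thesis
    by (rule cg_dist_le_if_reach)
qed

end
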